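(* Let $S$ be a ring with $1$ and $R$ a subring of $S$ with $1\in R$. Suppose there is a unit $x\in S$ such that $x+1$ is also a unit and $x^{-1}Rx=(x+1)^{-1}R(x+1)=R$. Then either $(x+1)^{-1}\in R$, or $I_{x+1}:=R\cap(x+1)R$ is an ideal of $R$ with $I_{x+1}\neq R$ and $x^{-1}ux-u\in I_{x+1}$ for all $u\in R$. *)

theory Defs
  imports "HOL-Algebra.Algebra"
begin

end

theory Submission
  imports Defs
begin

text \<open>Let \<open>y = x + 1\<close>. Conjugation by \<open>y\<close> preserves \<open>R\<close>, so \<open>z (y r) = y ((y\<inverse> z y) r)\<close> and
  \<open>R \<inter> yR\<close> is a two-sided ideal of \<open>R\<close>; it contains \<open>1\<close> only if \<open>y\<inverse> \<in> R\<close>. Writing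
  \<open>w = x\<inverse> u x\<close>, we have \<open>xw = ux\<close>, and adding \<open>w - u\<close> to both sides gives
  \<open>w - u = yw - uy = y (w - y\<inverse> u y)\<close>, an element of \<open>R \<inter> yR\<close>.\<close>

lemma (in ring) conj_diff_eq_mult_conj_diff:
  assumes x: "x \<in> Units R" and y: "x \<oplus> \<one> \<in> Units R" and u: "u \<in> carrier R"
  shows "inv x \<otimes> u \<otimes> x \<ominus> u
    = (x \<oplus> \<one>) \<otimes> (inv x \<otimes> u \<otimes> x \<ominus> inv (x \<oplus> \<one>) \<otimes> u \<otimes> (x \<oplus> \<one>))"
proof -
  define w where "w = inv x \<otimes> u \<otimes> x"
  have xc: "x \<in> carrier R" "inv x \<in> carrier R" using x by auto
  have yc: "x \<oplus> \<one> \<in> carrier R" "inv (x \<oplus> \<one>) \<in> carrier R" using y by auto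
  have wc: "w \<in> carrier R" using w_def xc u by simp
  have xw: "x \<otimes> w = u \<otimes> x"
    using x xc u by (simp add: w_def m_assoc[symmetric])
  have yu': "(x \<oplus> \<one>) \<otimes> (inv (x \<oplus> \<one>) \<otimes> u \<otimes> (x \<oplus> \<one>)) = u \<otimes> (x \<oplus> \<one>)"
    using y yc u by (simp add: m_assoc[symmetric])
  have "(x \<oplus> \<one>) \<otimes> (w \<ominus> inv (x \<oplus> \<one>) \<otimes> u \<otimes> (x \<oplus> \<one>))
      = (x \<otimes> w \<oplus> w) \<ominus> (u \<otimes> x \<oplus> u)"
    using xc yc wc u yu' by (simp add: minus_eq r_distr r_minus l_distr)
  also have "\<dots> = w \<ominus> u"
    using xc wc u xw by (simp add: a_minus_def minus_add a_ac r_neg r_neg2)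
  finally show ?thesis by (simp add: w_def)
qed

lemma (in ring) add_subgroup_subring_inter_mult:
  assumes K: "subring K R" and y: "y \<in> carrier R"
  shows "subgroup (K \<inter> {y \<otimes> k | k. k \<in> K}) (add_monoid R)"
proof (rule add.subgroupI)
  have KR: "K \<subseteq> carrier R" using subringE(1)[OF K] .
  show "K \<inter> {y \<otimes> k | k. k \<in> K} \<subseteq> carrier R" using KR by auto
  have "\<zero> = y \<otimes> \<zero>" "\<zero> \<in> K" using y subringE(2)[OF K] by simp_all
  then show "K \<inter> {y \<otimes> k | k. k \<in> K} \<noteq> {}" by blast
next
  fix a assume "a \<in> K \<inter> {y \<otimes> k | k. k \<in> K}"
  then obtain k where k: "k \<in> K" "a = y \<otimes> k" "a \<in> K" by blast
  have "\<ominus> a = y \<otimes> (\<ominus> k)" using k y subringE(1)[OF K] by (simp add: r_minus subsetD)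
  moreover have "\<ominus> a \<in> K" "\<ominus> k \<in> K" using k subringE(5)[OF K] by simp_all
  ultimately show "\<ominus> a \<in> K \<inter> {y \<otimes> k | k. k \<in> K}" by blast
next
  fix a b assume "a \<in> K \<inter> {y \<otimes> k | k. k \<in> K}" "b \<in> K \<inter> {y \<otimes> k | k. k \<in> K}"
  then obtain k l where kl: "k \<in> K" "a = y \<otimes> k" "a \<in> K" "l \<in> K" "b = y \<otimes> l" "b \<in> K"
    by blast
  have "a \<oplus> b = y \<otimes> (k \<oplus> l)" using kl y subringE(1)[OF K] by (simp add: r_distr subsetD)
  moreover have "a \<oplus> b \<in> K" "k \<oplus> l \<in> K" using kl subringE(7)[OF K] by simp_all
  ultimately show "a \<oplus> b \<in> K \<inter> {y \<otimes> k | k. k \<in> K}" by blast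
qed

lemma (in ring) ideal_subring_inter_unit_mult:
  assumes K: "subring K R" and y: "y \<in> Units R"
    and conj: "\<And>k. k \<in> K \<Longrightarrow> inv y \<otimes> k \<otimes> y \<in> K"
  shows "ideal (K \<inter> {y \<otimes> k | k. k \<in> K}) (R\<lparr>carrier := K\<rparr>)"
proof -
  let ?I = "K \<inter> {y \<otimes> k | k. k \<in> K}"
  have KR: "K \<subseteq> carrier R" using subringE(1)[OF K] .
  have yc: "y \<in> carrier R" "inv y \<in> carrier R" using y by auto
  have "subgroup ?I ((add_monoid R)\<lparr>carrier := K\<rparr>)"
    using add.subgroup_incl[OF add_subgroup_subring_inter_mult[OF K yc(1)]]
      subring.axioms(1)[OF K] by auto
  then show ?thesis
  proof (intro idealI subring_is_ring[OF K])
    fix a z assume a: "a \<in> ?I" and "z \<in> carrier (R\<lparr>carrier := K\<rparr>)"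
    then have z: "z \<in> K" by simp
    obtain k where k: "k \<in> K" "a = y \<otimes> k" using a by blast
    have zc: "z \<in> carrier R" and kc: "k \<in> carrier R" using z k KR by auto
    have "y \<otimes> ((inv y \<otimes> z \<otimes> y) \<otimes> k) = (y \<otimes> inv y) \<otimes> z \<otimes> (y \<otimes> k)"
      using yc zc kc by (simp add: m_assoc)
    also have "\<dots> = z \<otimes> a" using y zc yc kc k by simp
    finally have "z \<otimes> a = y \<otimes> ((inv y \<otimes> z \<otimes> y) \<otimes> k)" by simp
    moreover have "z \<otimes> a \<in> K" using a z subringE(6)[OF K] by blast
    moreover have "(inv y \<otimes> z \<otimes> y) \<otimes> k \<in> K" using conj z k subringE(6)[OF K] by blast
    ultimately show "z \<otimes>\<^bsub>R\<lparr>carrier := K\<rparr>\<^esub> a \<in> ?I" by auto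
  next
    fix a z assume a: "a \<in> ?I" and "z \<in> carrier (R\<lparr>carrier := K\<rparr>)"
    then have z: "z \<in> K" by simp
    obtain k where k: "k \<in> K" "a = y \<otimes> k" using a by blast
    have zc: "z \<in> carrier R" and kc: "k \<in> carrier R" using z k KR by auto
    have "a \<otimes> z = y \<otimes> (k \<otimes> z)" using k zc kc yc by (simp add: m_assoc)
    moreover have "a \<otimes> z \<in> K" using a z subringE(6)[OF K] by blast
    moreover have "k \<otimes> z \<in> K" using k z subringE(6)[OF K] by blast
    ultimately show "a \<otimes>\<^bsub>R\<lparr>carrier := K\<rparr>\<^esub> z \<in> ?I" by auto
  qed simp
qed

lemma (in ring) subring_inter_unit_mult_neq:
  assumes K: "subring K R" and y: "y \<in> Units R" and "inv y \<notin> K"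
  shows "K \<inter> {y \<otimes> k | k. k \<in> K} \<noteq> K"
proof
  assume "K \<inter> {y \<otimes> k | k. k \<in> K} = K"
  then obtain k where k: "k \<in> K" "\<one> = y \<otimes> k" using subringE(3)[OF K] by blast
  have "inv y = inv y \<otimes> (y \<otimes> k)" using k(2)[symmetric] y by simp
  also have "\<dots> = k"
    using y subsetD[OF subringE(1)[OF K] k(1)] by (simp add: m_assoc[symmetric] Units_closed)
  finally show False using k \<open>inv y \<notin> K\<close> by simp
qed

theorem lemma2p4:
  fixes S (structure) and R :: "'a set" and x :: 'a
  assumes "ring S"
    and "subring R S"
    and "x \<in> Units S"
    and "x \<oplus> \<one> \<in> Units S"
    and "(\<lambda>r. inv x \<otimes> r \<otimes> x) ` R = R"
    and "(\<lambda>r. inv (x \<oplus> \<one>) \<otimes> r \<otimes> (x \<oplus> \<one>)) ` R = R"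
  shows "inv (x \<oplus> \<one>) \<in> R \<or>
    (ideal (R \<inter> {(x \<oplus> \<one>) \<otimes> r | r. r \<in> R}) (S\<lparr>carrier := R\<rparr>)
     \<and> R \<inter> {(x \<oplus> \<one>) \<otimes> r | r. r \<in> R} \<noteq> R
     \<and> (\<forall>u\<in>R. inv x \<otimes> u \<otimes> x \<ominus> u \<in> R \<inter> {(x \<oplus> \<one>) \<otimes> r | r. r \<in> R}))"
proof -
  interpret ring S by fact
  have conj_x: "inv x \<otimes> u \<otimes> x \<in> R" if "u \<in> R" for u
    using assms(5) that by blast
  have conj_y: "inv (x \<oplus> \<one>) \<otimes> u \<otimes> (x \<oplus> \<one>) \<in> R" if "u \<in> R" for u
    using assms(6) that by blast
  have "inv x \<otimes> u \<otimes> x \<ominus> u \<in> R \<inter> {(x \<oplus> \<one>) \<otimes> r | r. r \<in> R}" if u: "u \<in> R" for u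
  proof -
    have "inv x \<otimes> u \<otimes> x \<ominus> u \<in> R"
      "inv x \<otimes> u \<otimes> x \<ominus> inv (x \<oplus> \<one>) \<otimes> u \<otimes> (x \<oplus> \<one>) \<in> R"
      using u conj_x conj_y subringE(5,7)[OF assms(2)] by (simp_all add: a_minus_def)
    moreover have "u \<in> carrier S" using u subringE(1)[OF assms(2)] by blast
    ultimately show ?thesis
      using conj_diff_eq_mult_conj_diff[OF assms(3,4)] by blast
  qed
  then show ?thesis
    using ideal_subring_inter_unit_mult[OF assms(2,4) conj_y]
      subring_inter_unit_mult_neq[OF assms(2,4)] by blast
qed

end
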